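(* Let $M,M'\in\mathrm{Mat}(2,\mathbb{Z})$ have the same trace, the same determinant and the same $\mathrm{mgcd}$. Then for every $n\in\mathbb{N}$, the pretail trees of the fixed point $0$ under the actions $x\mapsto Mx\bmod n$ and $x\mapsto M'x\bmod n$ on $(\mathbb{Z}/n\mathbb{Z})^2$ are isomorphic (as rooted trees).
   Context: For $M=\begin{pmatrix}a&b\\c&d\end{pmatrix}$, $\mathrm{mgcd}(M)=\gcd(b,c,d-a)$. A point $y$ is periodic if $M^ky\equiv y\pmod n$ for some $k\ge1$. A pretail of $0$ is a set $\{x,Mx,\dots,M^jx=0\}$ (mod $n$) in which $0$ is the only periodic point. The pretail tree of $0$ is the rooted tree with root $0$ whose vertices are the points of all pretails of $0$, with $x\ne0$ a child of $Mx$. *)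

theory Defs
  imports "HOL-Analysis.Analysis"
begin

text \<open>Integer 2x2 matrices are \<open>int^2^2\<close>; entries \<open>M$1$1 = a, M$1$2 = b, M$2$1 = c, M$2$2 = d\<close>.\<close>

definition mgcd :: "int^2^2 \<Rightarrow> int" where
  "mgcd M = gcd (M$1$2) (gcd (M$2$1) (M$2$2 - M$1$1))"

text \<open>Points of (Z/nZ)^2, represented by canonical residues in {0..n-1}.\<close>
definition points :: "nat \<Rightarrow> (int^2) set" where
  "points n = {x. \<forall>i. 0 \<le> x$i \<and> x$i < int n}"

definition act :: "int^2^2 \<Rightarrow> nat \<Rightarrow> int^2 \<Rightarrow> int^2" where
  "act M n x = (\<chi> i. (M *v x) $ i mod int n)"

definition periodic :: "int^2^2 \<Rightarrow> nat \<Rightarrow> int^2 \<Rightarrow> bool" where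
  "periodic M n y \<longleftrightarrow> (\<exists>k\<ge>1. (act M n ^^ k) y = y)"

definition pretail_vertices :: "int^2^2 \<Rightarrow> nat \<Rightarrow> (int^2) set" where
  "pretail_vertices M n = {x \<in> points n. \<exists>j. (act M n ^^ j) x = 0 \<and>
      (\<forall>i\<le>j. periodic M n ((act M n ^^ i) x) \<longrightarrow> (act M n ^^ i) x = 0)}"

definition pretail_child :: "int^2^2 \<Rightarrow> nat \<Rightarrow> int^2 \<Rightarrow> int^2 \<Rightarrow> bool" where
  "pretail_child M n x y \<longleftrightarrow> x \<in> pretail_vertices M n \<and> x \<noteq> 0 \<and> y = act M n x"

definition pretail_trees_iso :: "int^2^2 \<Rightarrow> int^2^2 \<Rightarrow> nat \<Rightarrow> bool" where
  "pretail_trees_iso M M' n \<longleftrightarrow> (\<exists>f. bij_betw f (pretail_vertices M n) (pretail_vertices M' n)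
      \<and> f 0 = 0
      \<and> (\<forall>x\<in>pretail_vertices M n. \<forall>y\<in>pretail_vertices M n.
            pretail_child M n x y \<longleftrightarrow> pretail_child M' n (f x) (f y)))"

end

theory Submission
  imports Defs "HOL-Number_Theory.Number_Theory"
begin

text \<open>A bijection of \<open>(\<int>/n\<int>)\<^sup>2\<close> that fixes \<open>0\<close> and conjugates the two actions is an
  isomorphism of pretail trees, so it suffices to conjugate \<open>M\<close> to \<open>M'\<close> modulo \<open>n\<close>.
  Write \<open>M = a I + h E\<close> with \<open>h = mgcd M\<close> and \<open>E = mat2 0 \<beta> \<gamma> \<epsilon>\<close> primitive.
  A primitive binary form takes a value prime to \<open>n\<close>, so \<open>E\<close> has a cyclic vector
  modulo \<open>n\<close> and \<open>M\<close> is conjugate to \<open>a I + h C\<close>, with \<open>C\<close> the companion matrix of \<open>E\<close>.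
  This normal form has lower-left entry \<open>h\<close> and the trace and determinant of \<open>M\<close>.
  Equal discriminants \<open>h\<^sup>2 (\<epsilon>\<^sup>2 + 4\<beta>\<gamma>)\<close> force \<open>a' \<equiv> a (mod h)\<close>, and then a shear
  conjugates the two normal forms already over \<open>\<int>\<close>.\<close>

definition conjugate_actions ::
    "int^2^2 \<Rightarrow> int^2^2 \<Rightarrow> nat \<Rightarrow> (int^2 \<Rightarrow> int^2) \<Rightarrow> (int^2 \<Rightarrow> int^2) \<Rightarrow> bool" where
  "conjugate_actions M M' n f g \<longleftrightarrow>
     (\<forall>x. f (act M n x) = act M' n (f x)) \<and> (\<forall>x. g (act M' n x) = act M n (g x)) \<and>
     (\<forall>x\<in>points n. f x \<in> points n \<and> g x \<in> points n \<and> g (f x) = x \<and> f (g x) = x) \<and>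
     f 0 = 0 \<and> g 0 = 0"

lemma zero_in_points: "n \<ge> 1 \<Longrightarrow> 0 \<in> points n"
  by (auto simp: points_def)

lemma act_in_points: "n \<ge> 1 \<Longrightarrow> act M n x \<in> points n"
  by (simp add: points_def act_def)

lemma funpow_act_in_points: "n \<ge> 1 \<Longrightarrow> x \<in> points n \<Longrightarrow> (act M n ^^ k) x \<in> points n"
  by (induction k) (auto simp: act_in_points)

lemma act_zero [simp]: "act M n 0 = 0"
  by (simp add: act_def vec_eq_iff)

lemma conjugate_actions_refl: "conjugate_actions M M n id id"
  by (simp add: conjugate_actions_def)

lemma conjugate_actions_sym: "conjugate_actions M M' n f g \<Longrightarrow> conjugate_actions M' M n g f"
  unfolding conjugate_actions_def by auto

lemma conjugate_actions_trans:
  "conjugate_actions M1 M2 n f g \<Longrightarrow> conjugate_actions M2 M3 n f' g' \<Longrightarrow>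
   conjugate_actions M1 M3 n (f' \<circ> f) (g \<circ> g')"
  unfolding conjugate_actions_def by auto

lemma conjugate_actions_funpow:
  "conjugate_actions M M' n f g \<Longrightarrow> f ((act M n ^^ k) x) = (act M' n ^^ k) (f x)"
  unfolding conjugate_actions_def by (induction k) auto

lemma conjugate_actions_inj_on:
  "conjugate_actions M M' n f g \<Longrightarrow> x \<in> points n \<Longrightarrow> y \<in> points n \<Longrightarrow> f x = f y \<Longrightarrow> x = y"
  unfolding conjugate_actions_def by metis

lemma conjugate_actions_periodic_iff:
  assumes conj: "conjugate_actions M M' n f g" and "n \<ge> 1" "y \<in> points n"
  shows "periodic M' n (f y) \<longleftrightarrow> periodic M n y"
proof -
  have "(act M' n ^^ k) (f y) = f y \<longleftrightarrow> (act M n ^^ k) y = y" for k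
    using conjugate_actions_funpow[OF conj] conjugate_actions_inj_on[OF conj]
      funpow_act_in_points[OF assms(2,3)] assms(3) by metis
  then show ?thesis
    unfolding periodic_def by simp
qed

lemma conjugate_actions_pretail_vertices:
  assumes conj: "conjugate_actions M M' n f g" and "n \<ge> 1" "x \<in> pretail_vertices M n"
  shows "f x \<in> pretail_vertices M' n"
proof -
  from assms(3) obtain j where x: "x \<in> points n" "(act M n ^^ j) x = 0"
    and only_0: "\<forall>i\<le>j. periodic M n ((act M n ^^ i) x) \<longrightarrow> (act M n ^^ i) x = 0"
    unfolding pretail_vertices_def by blast
  have orbit: "(act M' n ^^ i) (f x) = f ((act M n ^^ i) x)" for i
    using conjugate_actions_funpow[OF conj] by simp
  have f_eq_0: "f y = 0 \<longleftrightarrow> y = 0" if "y \<in> points n" for y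
    using conjugate_actions_inj_on[OF conj that zero_in_points[OF assms(2)]] conj
    by (auto simp: conjugate_actions_def)
  have "\<forall>i\<le>j. periodic M' n ((act M' n ^^ i) (f x)) \<longrightarrow> (act M' n ^^ i) (f x) = 0"
    using only_0 f_eq_0 funpow_act_in_points[OF assms(2) x(1)]
      conjugate_actions_periodic_iff[OF conj assms(2)] unfolding orbit by blast
  moreover have "(act M' n ^^ j) (f x) = 0"
    using x(2) f_eq_0[OF zero_in_points[OF assms(2)]] unfolding orbit by simp
  moreover have "f x \<in> points n"
    using conj x(1) by (simp add: conjugate_actions_def)
  ultimately show ?thesis
    unfolding pretail_vertices_def by blast
qed

lemma conjugate_actions_imp_pretail_trees_iso:
  assumes conj: "conjugate_actions M M' n f g" and n: "n \<ge> 1"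
  shows "pretail_trees_iso M M' n"
proof -
  have vertices_in_points: "pretail_vertices A n \<subseteq> points n" for A
    unfolding pretail_vertices_def by auto
  have "bij_betw f (pretail_vertices M n) (pretail_vertices M' n)"
  proof (rule bij_betw_byWitness[where f' = g])
    show "\<forall>x\<in>pretail_vertices M n. g (f x) = x" "\<forall>y\<in>pretail_vertices M' n. f (g y) = y"
      using conj vertices_in_points unfolding conjugate_actions_def by blast+
    show "f ` pretail_vertices M n \<subseteq> pretail_vertices M' n"
      using conjugate_actions_pretail_vertices[OF conj n] by blast
    show "g ` pretail_vertices M' n \<subseteq> pretail_vertices M n"
      using conjugate_actions_pretail_vertices[OF conjugate_actions_sym[OF conj] n] by blast
  qed
  moreover have f0: "f 0 = 0"
    using conj by (simp add: conjugate_actions_def)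
  moreover have "pretail_child M n x y \<longleftrightarrow> pretail_child M' n (f x) (f y)"
    if x: "x \<in> pretail_vertices M n" and y: "y \<in> pretail_vertices M n" for x y
  proof -
    have "x \<in> points n" "y \<in> points n"
      using x y vertices_in_points by auto
    then have "f x = 0 \<longleftrightarrow> x = 0" and "f y = act M' n (f x) \<longleftrightarrow> y = act M n x"
      using conjugate_actions_inj_on[OF conj] zero_in_points[OF n] act_in_points[OF n] f0 conj
      unfolding conjugate_actions_def by metis+
    then show ?thesis
      using x conjugate_actions_pretail_vertices[OF conj n x] unfolding pretail_child_def by blast
  qed
  ultimately show ?thesis
    unfolding pretail_trees_iso_def by blast
qed

definition cong_mat :: "nat \<Rightarrow> int^2^2 \<Rightarrow> int^2^2 \<Rightarrow> bool" where
  "cong_mat n A B \<longleftrightarrow> (\<forall>i j. [A$i$j = B$i$j] (mod int n))"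

lemma act_act: "act A n (act B n x) = act (A ** B) n x"
proof -
  have mod_lincomb: "(a * (u mod m) + b * (v mod m)) mod m = (a * u + b * v) mod m" for a b u v m :: int
    by (metis mod_add_eq mod_mult_right_eq)
  show ?thesis
    unfolding act_def
    by (simp add: vec_eq_iff matrix_vector_mult_def matrix_matrix_mult_def sum_2 mod_lincomb)
      (simp add: algebra_simps)
qed

lemma act_cong_mat:
  assumes "cong_mat n A B"
  shows "act A n = act B n"
proof
  fix x :: "int^2"
  have "(A *v x) $ i mod int n = (B *v x) $ i mod int n" for i
  proof -
    have "int n dvd A$i$1 - B$i$1" "int n dvd A$i$2 - B$i$2"
      using assms unfolding cong_mat_def by (metis cong_iff_dvd_diff)+
    then have "int n dvd (A$i$1 - B$i$1) * x$1 + (A$i$2 - B$i$2) * x$2"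
      by simp
    then show ?thesis
      unfolding mod_eq_dvd_iff by (simp add: matrix_vector_mult_def sum_2 algebra_simps)
  qed
  then show "act A n x = act B n x"
    unfolding act_def by (simp add: vec_eq_iff)
qed

lemma act_mat_1: "x \<in> points n \<Longrightarrow> act (mat 1) n x = x"
  unfolding act_def points_def by (simp add: vec_eq_iff)

lemma conjugate_actions_of_cong_mat:
  assumes n: "n \<ge> 1" and PM: "cong_mat n (P ** M) (M' ** P)"
    and QP: "cong_mat n (Q ** P) (mat 1)" and PQ: "cong_mat n (P ** Q) (mat 1)"
  shows "conjugate_actions M M' n (act P n) (act Q n)"
proof -
  have f_comm: "act P n (act M n x) = act M' n (act P n x)" for x
    using act_cong_mat[OF PM] by (simp add: act_act)
  have inverse: "act Q n (act P n x) = x" "act P n (act Q n x) = x" if "x \<in> points n" for x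
    using act_cong_mat[OF QP] act_cong_mat[OF PQ] act_mat_1[OF that] by (simp_all add: act_act)
  have g_comm: "act Q n (act M' n x) = act M n (act Q n x)" for x
  proof -
    define z where "z = act (mat 1) n x"
    have z: "z \<in> points n"
      unfolding z_def by (rule act_in_points[OF n])
    have "act Q n (act M' n x) = act Q n (act M' n (act P n (act Q n z)))"
      using inverse(2)[OF z] by (simp add: z_def act_act)
    also have "\<dots> = act M n (act Q n z)"
      using f_comm inverse(1) act_in_points[OF n] by metis
    also have "\<dots> = act M n (act Q n x)"
      by (simp add: z_def act_act)
    finally show ?thesis .
  qed
  show ?thesis
    unfolding conjugate_actions_def using f_comm g_comm inverse act_in_points[OF n] by simp
qed

definition mat2 :: "int \<Rightarrow> int \<Rightarrow> int \<Rightarrow> int \<Rightarrow> int^2^2" where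
  "mat2 a b c d = (\<chi> i j. if i = 1 then (if j = 1 then a else b) else (if j = 1 then c else d))"

lemma mat2_nth [simp]:
  "mat2 a b c d $ 1 $ 1 = a" "mat2 a b c d $ 1 $ 2 = b"
  "mat2 a b c d $ 2 $ 1 = c" "mat2 a b c d $ 2 $ 2 = d"
  by (simp_all add: mat2_def)

lemma mat2_eta: "M = mat2 (M$1$1) (M$1$2) (M$2$1) (M$2$2)"
  by (simp add: vec_eq_iff forall_2)

lemma mat2_mult:
  "mat2 a b c d ** mat2 a' b' c' d' = mat2 (a*a' + b*c') (a*b' + b*d') (c*a' + d*c') (c*b' + d*d')"
  by (simp add: vec_eq_iff forall_2 matrix_matrix_mult_def sum_2)

lemma mat2_1: "mat 1 = mat2 1 0 0 1"
  by (simp add: vec_eq_iff forall_2 mat_def)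

lemma cong_mat_mat2:
  "cong_mat n (mat2 a b c d) (mat2 a' b' c' d') \<longleftrightarrow>
     [a = a'] (mod int n) \<and> [b = b'] (mod int n) \<and> [c = c'] (mod int n) \<and> [d = d'] (mod int n)"
  by (simp add: cong_mat_def forall_2)

lemma trace_mat2: "trace (mat2 a b c d) = a + d"
  by (simp add: trace_def sum_2)

lemma det_mat2: "det (mat2 a b c d) = a*d - b*c"
  by (simp add: det_2)

text \<open>The columns of \<open>B\<close> are \<open>v = (x, y)\<close> and \<open>E v\<close> for \<open>E = mat2 0 \<beta> \<gamma> \<epsilon>\<close>, and
  \<open>det B\<close> is the binary form below.  If it is a unit mod \<open>n\<close>, then in the basis \<open>v, E v\<close> the
  matrix \<open>E\<close> becomes its companion matrix \<open>mat2 0 (\<beta>*\<gamma>) 1 \<epsilon>\<close>.\<close>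
lemma conjugate_actions_companion:
  assumes n: "n \<ge> 1" and unit: "coprime (\<gamma>*x^2 + \<epsilon>*x*y - \<beta>*y^2) (int n)"
  shows "\<exists>f g. conjugate_actions (mat2 a (h*\<beta>) (h*\<gamma>) (a + h*\<epsilon>)) (mat2 a (h*\<beta>*\<gamma>) h (a + h*\<epsilon>)) n f g"
proof -
  obtain u where u: "[u * (\<gamma>*x^2 + \<epsilon>*x*y - \<beta>*y^2) = 1] (mod int n)"
    using cong_solve_coprime_int[OF unit] by (auto simp: mult.commute)
  define B where "B = mat2 x (\<beta>*y) y (\<gamma>*x + \<epsilon>*y)"
  define B' where "B' = mat2 (u*(\<gamma>*x + \<epsilon>*y)) (-u*\<beta>*y) (-u*y) (u*x)"
  have "conjugate_actions (mat2 a (h*\<beta>) (h*\<gamma>) (a + h*\<epsilon>)) (mat2 a (h*\<beta>*\<gamma>) h (a + h*\<epsilon>)) n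
          (act B' n) (act B n)"
  proof (rule conjugate_actions_of_cong_mat[OF n])
    show "cong_mat n (B' ** mat2 a (h*\<beta>) (h*\<gamma>) (a + h*\<epsilon>)) (mat2 a (h*\<beta>*\<gamma>) h (a + h*\<epsilon>) ** B')"
      unfolding B'_def mat2_mult cong_mat_mat2 by (simp add: algebra_simps power2_eq_square)
    show "cong_mat n (B ** B') (mat 1)" "cong_mat n (B' ** B) (mat 1)"
      unfolding B_def B'_def mat2_mult mat2_1 cong_mat_mat2 using u
      by (simp_all add: algebra_simps power2_eq_square)
  qed
  then show ?thesis
    by blast
qed

lemma conjugate_actions_shear:
  assumes n: "n \<ge> 1" and h: "N$2$1 = h" "N'$2$1 = h" "h \<noteq> 0"
    and tr: "trace N = trace N'" and dt: "det N = det N'" and diag: "h dvd N'$1$1 - N$1$1"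
  shows "\<exists>f g. conjugate_actions N N' n f g"
proof -
  obtain a b d a' b' d' where N: "N = mat2 a b h d" and N': "N' = mat2 a' b' h d'"
    using h mat2_eta by metis
  obtain k where a': "a' = a + k*h"
    using diag unfolding N N' by (auto simp: dvd_def algebra_simps)
  have d': "d' = d - k*h"
    using tr unfolding N N' a' by (simp add: trace_mat2)
  have "h * b' = h * (b + k*d - k*a - k^2*h)"
    using dt unfolding N N' det_mat2 a' d' by (simp add: algebra_simps power2_eq_square)
  then have b': "b' = b + k*d - k*a - k^2*h"
    using h(3) by simp
  define S S' where "S = mat2 1 k 0 1" "S' = mat2 1 (-k) 0 1"
  have "conjugate_actions N N' n (act S n) (act S' n)"
  proof (rule conjugate_actions_of_cong_mat[OF n])
    show "cong_mat n (S ** N) (N' ** S)"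
      unfolding N N' S_S'_def mat2_mult cong_mat_mat2 a' b' d'
      by (simp add: algebra_simps power2_eq_square)
    show "cong_mat n (S' ** S) (mat 1)" "cong_mat n (S ** S') (mat 1)"
      unfolding S_S'_def mat2_mult mat2_1 cong_mat_mat2 by simp_all
  qed
  then show ?thesis
    by blast
qed

lemma coprime_if_no_common_prime_divisor:
  fixes a b :: int
  assumes "b \<noteq> 0" and "\<And>p. prime p \<Longrightarrow> p dvd b \<Longrightarrow> \<not> p dvd a"
  shows "coprime a b"
proof (rule ccontr)
  assume "\<not> coprime a b"
  then have "gcd a b \<noteq> 0" "\<not> is_unit (gcd a b)"
    using assms(1) by (auto simp: coprime_iff_gcd_eq_1)
  then obtain p where "prime p" "p dvd gcd a b"
    using prime_divisor_exists by blast
  then show False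
    using assms(2) by auto
qed

lemma prime_dvd_prod_primes_iff:
  fixes p :: int
  assumes "finite S" "\<forall>q\<in>S. prime q" "prime p"
  shows "p dvd \<Prod>S \<longleftrightarrow> p \<in> S"
  using assms prime_dvd_prod_iff[OF assms(1,3), of id] primes_dvd_imp_eq by auto

lemma prime_not_dvd_binary_form:
  fixes p \<beta> \<gamma> \<epsilon> x y :: int
  assumes p: "prime p" and "\<not> (p dvd \<beta> \<and> p dvd \<gamma> \<and> p dvd \<epsilon>)"
    and x: "p dvd x \<longleftrightarrow> \<not> p dvd \<beta>" and y: "p dvd y \<longleftrightarrow> p dvd \<beta> \<and> \<not> p dvd \<gamma>"
  shows "\<not> p dvd \<gamma>*x^2 + \<epsilon>*x*y - \<beta>*y^2"
proof -
  have p_dvd_mult: "p dvd u * v \<longleftrightarrow> p dvd u \<or> p dvd v" for u v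
    using p by (simp add: prime_dvd_mult_iff)
  consider "\<not> p dvd \<beta>" | "p dvd \<beta>" "\<not> p dvd \<gamma>" | "p dvd \<beta>" "p dvd \<gamma>" "\<not> p dvd \<epsilon>"
    using assms(2) by blast
  then show ?thesis
  proof cases
    case 1
    have "\<gamma>*x^2 + \<epsilon>*x*y - \<beta>*y^2 = x*(\<gamma>*x + \<epsilon>*y) - \<beta>*(y*y)"
      by (simp add: algebra_simps power2_eq_square)
    then show ?thesis
      using 1 x y by (simp add: dvd_diff_right_iff p_dvd_mult)
  next
    case 2
    have "\<gamma>*x^2 + \<epsilon>*x*y - \<beta>*y^2 = \<gamma>*(x*x) + y*(\<epsilon>*x - \<beta>*y)"
      by (simp add: algebra_simps power2_eq_square)
    then show ?thesis
      using 2 x y by (simp add: dvd_add_left_iff p_dvd_mult)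
  next
    case 3
    have "\<gamma>*x^2 + \<epsilon>*x*y - \<beta>*y^2 = \<epsilon>*x*y + (\<gamma>*x^2 - \<beta>*y^2)"
      by simp
    moreover have "p dvd \<epsilon>*x*y + (\<gamma>*x^2 - \<beta>*y^2) \<longleftrightarrow> p dvd \<epsilon>*x*y"
      by (rule dvd_add_left_iff) (use 3 in simp)
    moreover have "\<not> p dvd \<epsilon>*x*y"
      using 3 x y by (simp add: p_dvd_mult)
    ultimately show ?thesis
      by metis
  qed
qed

lemma exists_binary_form_value_coprime:
  fixes \<beta> \<gamma> \<epsilon> :: int
  assumes "gcd \<beta> (gcd \<gamma> \<epsilon>) = 1" and "n \<ge> 1"
  shows "\<exists>x y. coprime (\<gamma>*x^2 + \<epsilon>*x*y - \<beta>*y^2) (int n)"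
proof -
  define X where "X = {p. prime p \<and> p dvd int n \<and> \<not> p dvd \<beta>}"
  define Y where "Y = {p. prime p \<and> p dvd int n \<and> p dvd \<beta> \<and> \<not> p dvd \<gamma>}"
  have "finite X" "finite Y"
    using assms(2) by (auto intro: finite_subset[OF _ finite_divisors_int[of "int n"]] simp: X_def Y_def)
  then have "p dvd \<Prod>X \<longleftrightarrow> \<not> p dvd \<beta>" "p dvd \<Prod>Y \<longleftrightarrow> p dvd \<beta> \<and> \<not> p dvd \<gamma>"
    if "prime p" "p dvd int n" for p
    using that prime_dvd_prod_primes_iff by (auto simp: X_def Y_def)
  moreover have "\<not> (p dvd \<beta> \<and> p dvd \<gamma> \<and> p dvd \<epsilon>)" if "prime p" for p
    using assms(1) that by (metis gcd_greatest_iff not_prime_unit is_unit_gcd)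
  ultimately have "coprime (\<gamma>*(\<Prod>X)^2 + \<epsilon>*(\<Prod>X)*(\<Prod>Y) - \<beta>*(\<Prod>Y)^2) (int n)"
    using assms(2) by (intro coprime_if_no_common_prime_divisor prime_not_dvd_binary_form) auto
  then show ?thesis
    by blast
qed

lemma mgcd_eq_0_imp_eq:
  assumes "mgcd M = 0" "mgcd M' = 0" "trace M = trace M'"
  shows "M = M'"
proof -
  have scalar: "A = mat2 (A$1$1) 0 0 (A$1$1)" if "mgcd A = 0" for A
    using that mat2_eta[of A] unfolding mgcd_def by simp
  have "M$1$1 + M$1$1 = M'$1$1 + M'$1$1"
    using assms(3) scalar[OF assms(1)] scalar[OF assms(2)] trace_mat2 by metis
  then show ?thesis
    using scalar[OF assms(1)] scalar[OF assms(2)] by simp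
qed

lemma mgcd_decomposition:
  assumes "mgcd M \<noteq> 0"
  obtains a \<beta> \<gamma> \<epsilon> where "M = mat2 a (mgcd M*\<beta>) (mgcd M*\<gamma>) (a + mgcd M*\<epsilon>)"
    and "gcd \<beta> (gcd \<gamma> \<epsilon>) = 1"
proof -
  let ?h = "mgcd M"
  have "?h dvd M$1$2" "?h dvd M$2$1" "?h dvd M$2$2 - M$1$1"
    unfolding mgcd_def by (meson gcd_dvd1 gcd_dvd2 dvd_trans)+
  then obtain \<beta> \<gamma> \<epsilon> where b: "M$1$2 = ?h*\<beta>" and c: "M$2$1 = ?h*\<gamma>" and e: "M$2$2 - M$1$1 = ?h*\<epsilon>"
    by (elim dvdE)
  have "?h = gcd (?h*\<beta>) (gcd (?h*\<gamma>) (?h*\<epsilon>))"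
    using b c e unfolding mgcd_def by simp
  also have "\<dots> = ?h * gcd \<beta> (gcd \<gamma> \<epsilon>)"
    by (simp add: gcd_mult_left abs_mult mgcd_def)
  finally have "gcd \<beta> (gcd \<gamma> \<epsilon>) = 1"
    using assms by simp
  moreover have "M = mat2 (M$1$1) (?h*\<beta>) (?h*\<gamma>) (M$1$1 + ?h*\<epsilon>)"
    using b c e mat2_eta[of M] by (metis add.commute diff_add_cancel)
  ultimately show thesis
    by (intro that)
qed

lemma mgcd_dvd_diagonal_diff:
  assumes tr: "trace M = trace M'" and dt: "det M = det M'" and same_mgcd: "mgcd M = mgcd M'"
  shows "mgcd M dvd M'$1$1 - M$1$1"
proof (cases "mgcd M = 0")
  case True
  then show ?thesis
    using mgcd_eq_0_imp_eq[OF True _ tr] same_mgcd by simp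
next
  case False
  define h where "h = mgcd M"
  obtain a \<beta> \<gamma> \<epsilon> where M: "M = mat2 a (h*\<beta>) (h*\<gamma>) (a + h*\<epsilon>)"
    using mgcd_decomposition[OF False] unfolding h_def by metis
  obtain a' \<beta>' \<gamma>' \<epsilon>' where M': "M' = mat2 a' (h*\<beta>') (h*\<gamma>') (a' + h*\<epsilon>')"
    using mgcd_decomposition False unfolding same_mgcd h_def by metis
  have "h^2 * (\<epsilon>^2 + 4*\<beta>*\<gamma>) = h^2 * (\<epsilon>'^2 + 4*\<beta>'*\<gamma>')"
  proof -
    have discriminant: "trace N^2 - 4 * det N = h^2 * (e^2 + 4*b*c)"
      if "N = mat2 x (h*b) (h*c) (x + h*e)" for N x b c e
      unfolding that trace_mat2 det_mat2 by (simp add: algebra_simps power2_eq_square)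
    show ?thesis
      using discriminant[OF M] discriminant[OF M'] tr dt by metis
  qed
  then have "\<epsilon>^2 + 4*\<beta>*\<gamma> = \<epsilon>'^2 + 4*\<beta>'*\<gamma>'"
    using False unfolding h_def by simp
  moreover have "(\<epsilon> - \<epsilon>') * (\<epsilon> - \<epsilon>' + 2*\<epsilon>') =
      (\<epsilon>^2 + 4*\<beta>*\<gamma>) - (\<epsilon>'^2 + 4*\<beta>'*\<gamma>') + 4 * (\<beta>'*\<gamma>' - \<beta>*\<gamma>)"
    by (simp add: algebra_simps power2_eq_square)
  ultimately have "(\<epsilon> - \<epsilon>') * (\<epsilon> - \<epsilon>' + 2*\<epsilon>') = 4 * (\<beta>'*\<gamma>' - \<beta>*\<gamma>)"
    by simp
  then have "even ((\<epsilon> - \<epsilon>') * (\<epsilon> - \<epsilon>' + 2*\<epsilon>'))"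
    by simp
  then have "even (\<epsilon> - \<epsilon>')"
    by auto
  then obtain k where k: "\<epsilon> - \<epsilon>' = 2*k"
    by blast
  have "2*a + h*\<epsilon> = 2*a' + h*\<epsilon>'"
    using tr unfolding M M' trace_mat2 by simp
  then have "a' - a = h*k"
    using k by (simp add: algebra_simps)
  then show ?thesis
    unfolding h_def[symmetric] by (simp add: M M')
qed

lemma conjugate_actions_normal_form:
  assumes n: "n \<ge> 1" and "mgcd M \<noteq> 0"
  obtains N f g where "conjugate_actions M N n f g" and "N$1$1 = M$1$1" and "N$2$1 = mgcd M"
    and "trace N = trace M" and "det N = det M"
proof -
  define h where "h = mgcd M"
  obtain a \<beta> \<gamma> \<epsilon> where M: "M = mat2 a (h*\<beta>) (h*\<gamma>) (a + h*\<epsilon>)"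
    and primitive: "gcd \<beta> (gcd \<gamma> \<epsilon>) = 1"
    using mgcd_decomposition[OF assms(2)] unfolding h_def by metis
  obtain x y where "coprime (\<gamma>*x^2 + \<epsilon>*x*y - \<beta>*y^2) (int n)"
    using exists_binary_form_value_coprime[OF primitive n] by blast
  then obtain f g where "conjugate_actions M (mat2 a (h*\<beta>*\<gamma>) h (a + h*\<epsilon>)) n f g"
    using conjugate_actions_companion[OF n] unfolding M by blast
  moreover have "trace (mat2 a (h*\<beta>*\<gamma>) h (a + h*\<epsilon>)) = trace M"
    and "det (mat2 a (h*\<beta>*\<gamma>) h (a + h*\<epsilon>)) = det M"
    unfolding M trace_mat2 det_mat2 by (simp_all add: algebra_simps)
  moreover have "M$1$1 = a"
    by (simp add: M)
  ultimately show thesis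
    using that unfolding h_def by simp
qed

theorem corollary3p7:
  fixes M M' :: "int^2^2" and n :: nat
  assumes "trace M = trace M'" and "det M = det M'" and "mgcd M = mgcd M'"
    and "n \<ge> 1"
  shows "pretail_trees_iso M M' n"
proof (cases "mgcd M = 0")
  case True
  then have "M = M'"
    using mgcd_eq_0_imp_eq assms(1,3) by simp
  then show ?thesis
    using conjugate_actions_refl conjugate_actions_imp_pretail_trees_iso assms(4) by blast
next
  case False
  obtain N f g where N: "conjugate_actions M N n f g" "N$1$1 = M$1$1" "N$2$1 = mgcd M"
    "trace N = trace M" "det N = det M"
    using conjugate_actions_normal_form[OF assms(4) False] by blast
  obtain N' f' g' where N': "conjugate_actions M' N' n f' g'" "N'$1$1 = M'$1$1" "N'$2$1 = mgcd M"
    "trace N' = trace M'" "det N' = det M'"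
    using conjugate_actions_normal_form[OF assms(4)] False unfolding assms(3) by metis
  obtain s s' where "conjugate_actions N N' n s s'"
    using conjugate_actions_shear[OF assms(4) N(3) N'(3) False] N N' assms(1,2)
      mgcd_dvd_diagonal_diff[OF assms(1-3)] by auto
  then have "conjugate_actions M M' n (g' \<circ> (s \<circ> f)) ((g \<circ> s') \<circ> f')"
    using N(1) N'(1) by (blast intro: conjugate_actions_trans conjugate_actions_sym)
  then show ?thesis
    using conjugate_actions_imp_pretail_trees_iso assms(4) by blast
qed

end
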